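(* Let $k$ be an infinite field, $<$ a term order on $k[X_1,\ldots,X_n]$ with $X_1<\cdots<X_n$, and $A\subseteq k^n$ a finite union of pairwise distinct affine $d$-planes. For each $J\subseteq\{1,\ldots,n\}$ with $\#J=d$, let $A_J$ be the union of those irreducible components of $A$ whose minimal free variables are $\{X_j;\ j\in J\}$, and let $m_J$ be their number. Assume that for every such $J$, every $d$-plane contained in $D(A_J)$ is parallel to $\bigoplus_{j\in J}\mathbb{N}e_j$ and the number of these $d$-planes is $m_J$. Then the union $E(A)$ of all $d$-planes contained in $D(A)$ equals $\bigcup_J E(A_J)$, where $E(A_J)$ is the union of all $d$-planes contained in $D(A_J)$; consequently, for every $J$ with $\#J=d$, the number of $d$-planes in $D(A)$ parallel to $\bigoplus_{j\in J}\mathbb{N}e_j$ equals $m_J$.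
   Context: $I(A)$ is the ideal of polynomials vanishing on $A\subseteq k^n$ (with $I(\emptyset)=k[X]$); ${\rm LE}(f)$ is the exponent of the leading monomial of $f\neq0$ w.r.t. $<$; $C(A)=\{{\rm LE}(f);\ 0\neq f\in I(A)\}$, $D(A)=\mathbb{N}^n\setminus C(A)$. A $d$-plane in $\delta\subseteq\mathbb{N}^n$ is a subset of $\delta$ of the form $\gamma+\bigoplus_{j\in J}\mathbb{N}e_j$ with $\#J=d$ and $\gamma_j=0$ for $j\in J$, said to be parallel to $\bigoplus_{j\in J}\mathbb{N}e_j$. An affine $d$-plane is a translate of a $d$-dimensional linear subspace of $k^n$. $\{X_j;\ j\in J\}$ ($\#J=d$) is a set of free variables of an affine $d$-plane $A'$ if the coordinate projection $A'\to k^J$ is bijective; these are the minimal free variables of $A'$ if moreover for no $j\in J$ and $i\notin J$ with $i<j$ is $\{X_j;\ j\in(J\setminus\{j\})\cup\{i\}\}$ a set of free variables of $A'$. *)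

theory Defs
  imports Main "HOL-Library.Poly_Mapping" "HOL-Library.FuncSet"
begin

text \<open>Variables X_1..X_n are indexed by 0..n-1. Monomials/exponents are finitely
supported functions nat =>0 nat with support in {..<n}; polynomials in k[X] are
finitely supported functions from monomials to coefficients. Points of k^n are
functions nat => k vanishing outside {..<n}.\<close>

type_synonym mono = "nat \<Rightarrow>\<^sub>0 nat"
type_synonym 'k mpoly = "mono \<Rightarrow>\<^sub>0 'k"

definition monoms :: "nat \<Rightarrow> mono set" where
  "monoms n = {m. Poly_Mapping.keys m \<subseteq> {..<n}}"

definition polys :: "nat \<Rightarrow> ('k::zero) mpoly set" where
  "polys n = {p. \<forall>m\<in>Poly_Mapping.keys p. m \<in> monoms n}"

definition points :: "nat \<Rightarrow> (nat \<Rightarrow> 'k::zero) set" where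
  "points n = {x. \<forall>i\<ge>n. x i = 0}"

definition eval :: "('k::comm_semiring_1) mpoly \<Rightarrow> (nat \<Rightarrow> 'k) \<Rightarrow> 'k" where
  "eval p x = (\<Sum>m\<in>Poly_Mapping.keys p. Poly_Mapping.lookup p m * (\<Prod>i\<in>Poly_Mapping.keys m. x i ^ Poly_Mapping.lookup m i))"

definition term_order :: "nat \<Rightarrow> (mono \<Rightarrow> mono \<Rightarrow> bool) \<Rightarrow> bool" where
  "term_order n ord \<longleftrightarrow>
     (\<forall>a\<in>monoms n. \<not> ord a a) \<and>
     (\<forall>a\<in>monoms n. \<forall>b\<in>monoms n. \<forall>c\<in>monoms n. ord a b \<longrightarrow> ord b c \<longrightarrow> ord a c) \<and>
     (\<forall>a\<in>monoms n. \<forall>b\<in>monoms n. a \<noteq> b \<longrightarrow> ord a b \<or> ord b a) \<and>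
     (\<forall>a\<in>monoms n. \<forall>b\<in>monoms n. \<forall>c\<in>monoms n. ord a b \<longrightarrow> ord (a + c) (b + c)) \<and>
     (\<forall>a\<in>monoms n. a \<noteq> 0 \<longrightarrow> ord 0 a)"

definition LE :: "(mono \<Rightarrow> mono \<Rightarrow> bool) \<Rightarrow> ('k::zero) mpoly \<Rightarrow> mono" where
  "LE ord p = (THE m. m \<in> Poly_Mapping.keys p \<and> (\<forall>m'\<in>Poly_Mapping.keys p. m' \<noteq> m \<longrightarrow> ord m' m))"

definition vanishing_ideal :: "nat \<Rightarrow> (nat \<Rightarrow> 'k::comm_semiring_1) set \<Rightarrow> 'k mpoly set" where
  "vanishing_ideal n A = {p \<in> polys n. \<forall>x\<in>A. eval p x = 0}"

definition Cset :: "nat \<Rightarrow> (mono \<Rightarrow> mono \<Rightarrow> bool) \<Rightarrow> (nat \<Rightarrow> 'k::comm_semiring_1) set \<Rightarrow> mono set" where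
  "Cset n ord A = {LE ord f | f. f \<noteq> 0 \<and> f \<in> vanishing_ideal n A}"

definition Dset :: "nat \<Rightarrow> (mono \<Rightarrow> mono \<Rightarrow> bool) \<Rightarrow> (nat \<Rightarrow> 'k::comm_semiring_1) set \<Rightarrow> mono set" where
  "Dset n ord A = monoms n - Cset n ord A"

definition is_dplane_in :: "nat \<Rightarrow> nat \<Rightarrow> mono set \<Rightarrow> nat set \<Rightarrow> mono set \<Rightarrow> bool" where
  "is_dplane_in n d \<delta> J P \<longleftrightarrow> J \<subseteq> {..<n} \<and> card J = d \<and> P \<subseteq> \<delta> \<and>
     (\<exists>\<gamma>\<in>monoms n. (\<forall>j\<in>J. Poly_Mapping.lookup \<gamma> j = 0) \<and> P = {\<gamma> + m | m. Poly_Mapping.keys m \<subseteq> J})"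

definition Eset :: "nat \<Rightarrow> nat \<Rightarrow> mono set \<Rightarrow> mono set" where
  "Eset n d \<delta> = \<Union>{P. \<exists>J. is_dplane_in n d \<delta> J P}"

definition affine_dplane :: "nat \<Rightarrow> nat \<Rightarrow> (nat \<Rightarrow> 'k::field) set \<Rightarrow> bool" where
  "affine_dplane n d S \<longleftrightarrow>
     (\<exists>p v. p \<in> points n \<and> (\<forall>i<d. v i \<in> points n) \<and>
        (\<forall>t. (\<forall>j. (\<Sum>i<d. t i * v i j) = 0) \<longrightarrow> (\<forall>i<d. t i = 0)) \<and>
        S = {(\<lambda>j. p j + (\<Sum>i<d. t i * v i j)) | t. True})"

definition free_vars :: "nat \<Rightarrow> nat \<Rightarrow> (nat \<Rightarrow> 'k::field) set \<Rightarrow> nat set \<Rightarrow> bool" where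
  "free_vars n d S J \<longleftrightarrow> J \<subseteq> {..<n} \<and> card J = d \<and>
     bij_betw (\<lambda>x. restrict x J) S (J \<rightarrow>\<^sub>E (UNIV :: 'k set))"

definition minimal_free_vars :: "nat \<Rightarrow> nat \<Rightarrow> (nat \<Rightarrow> 'k::field) set \<Rightarrow> nat set \<Rightarrow> bool" where
  "minimal_free_vars n d S J \<longleftrightarrow> free_vars n d S J \<and>
     \<not> (\<exists>j\<in>J. \<exists>i\<in>{..<n} - J. i < j \<and> free_vars n d S ((J - {j}) \<union> {i}))"

end

theory Submission
  imports Defs "HOL-Library.Function_Algebras" "HOL.Vector_Spaces"
begin

(* Write A for the union of the planes in P, D = D(A) and D_J = D(A_J).  As A_J is contained in
   A, I(A) is contained in I(A_J), hence D_J is a subset of D and every d-plane of D_J is a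
   d-plane of D; by hypothesis it is parallel to J, and D_J has exactly m_J of them.  Every
   component has some set of minimal free variables, so #P <= sum_J m_J.  The heart of the
   proof is the bound
     (#)  D(A) contains at most #P d-planes.
   Hence the d-planes of D are exactly those of the D_J, which gives both claims.
   Bound (#) is a Hilbert-function count: the monomials of degree <= s with exponent in D(A)
   are linearly independent as functions on A (a vanishing combination would be a polynomial
   of I(A) whose leading exponent lies in D(A)), while on each plane of P they lie in the
   (s+d choose d)-dimensional space of polynomials of degree <= s in d parameters.  On the
   other hand, q distinct d-planes of D contain q pairwise disjoint boxes of
   (s-G+d choose d) exponents of degree <= s, for a constant G, and a binomial estimate
   rules out q > #P for s large. *)
subsection \<open>Total degree of exponents and counting monomials\<close>

definition mdeg :: "mono \<Rightarrow> nat" where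
  "mdeg a = sum (Poly_Mapping.lookup a) (Poly_Mapping.keys a)"

lemma mdeg_superset:
  assumes "finite K" "Poly_Mapping.keys a \<subseteq> K"
  shows "mdeg a = sum (Poly_Mapping.lookup a) K"
  unfolding mdeg_def
  by (rule sum.mono_neutral_left) (use assms in \<open>auto simp: in_keys_iff\<close>)

lemma mdeg_zero [simp]: "mdeg 0 = 0"
  by (simp add: mdeg_def)

lemma mdeg_add: "mdeg (a + b) = mdeg a + mdeg b"
proof -
  let ?K = "Poly_Mapping.keys a \<union> Poly_Mapping.keys b"
  have "mdeg (a + b) = sum (Poly_Mapping.lookup (a + b)) ?K"
    by (rule mdeg_superset) (auto simp: keys_add)
  also have "\<dots> = sum (Poly_Mapping.lookup a) ?K + sum (Poly_Mapping.lookup b) ?K"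
    by (simp add: lookup_add sum.distrib)
  also have "\<dots> = mdeg a + mdeg b"
    by (simp add: mdeg_superset[of ?K a] mdeg_superset[of ?K b])
  finally show ?thesis .
qed

lemma mdeg_sum: "mdeg (sum f A) = (\<Sum>x\<in>A. mdeg (f x))"
  by (induction A rule: infinite_finite_induct) (auto simp: mdeg_add)

lemma mdeg_single [simp]: "mdeg (Poly_Mapping.single i k) = k"
  by (cases "k = 0") (auto simp: mdeg_def)

lemma mdeg_eq_0: "mdeg a = 0 \<longleftrightarrow> a = 0"
  by (auto simp: mdeg_def in_keys_iff poly_mapping_eqI)

lemma lookup_le_mdeg: "Poly_Mapping.lookup a j \<le> mdeg a"
proof (cases "j \<in> Poly_Mapping.keys a")
  case True
  then show ?thesis unfolding mdeg_def by (intro member_le_sum) auto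
next
  case False
  then show ?thesis by (simp add: in_keys_iff)
qed

lemma mdeg_Suc_decomp:
  assumes "mdeg a = Suc k"
  obtains i b where "a = b + Poly_Mapping.single i 1" "mdeg b = k"
proof -
  have "a \<noteq> 0" using assms by auto
  then obtain i where i: "i \<in> Poly_Mapping.keys a"
    by (metis keys_zero poly_mapping_eqI lookup_zero not_in_keys_iff_lookup_eq_zero)
  define b where "b = a - Poly_Mapping.single i 1"
  have eq: "a = b + Poly_Mapping.single i 1"
    using i by (intro poly_mapping_eqI)
      (auto simp: b_def lookup_add lookup_minus lookup_single when_def in_keys_iff)
  then have "mdeg b = k" using assms by (simp add: mdeg_add)
  with eq show thesis by (rule that)
qed

definition deg_monoms :: "nat set \<Rightarrow> nat \<Rightarrow> mono set" where
  "deg_monoms J s = {m. Poly_Mapping.keys m \<subseteq> J \<and> mdeg m \<le> s}"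

lemma deg_monoms_mono: "s \<le> s' \<Longrightarrow> deg_monoms J s \<subseteq> deg_monoms J s'"
  by (auto simp: deg_monoms_def)

lemma deg_monoms_insert_Suc:
  assumes "j \<notin> J"
  shows "deg_monoms (insert j J) (Suc s) =
    deg_monoms J (Suc s) \<union> (\<lambda>m. m + Poly_Mapping.single j 1) ` deg_monoms (insert j J) s"
proof (intro equalityI subsetI)
  fix m assume m: "m \<in> deg_monoms (insert j J) (Suc s)"
  show "m \<in> deg_monoms J (Suc s) \<union> (\<lambda>m. m + Poly_Mapping.single j 1) ` deg_monoms (insert j J) s"
  proof (cases "Poly_Mapping.lookup m j = 0")
    case True
    then have "Poly_Mapping.keys m \<subseteq> J" using m by (auto simp: deg_monoms_def in_keys_iff)
    then show ?thesis using m by (auto simp: deg_monoms_def)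
  next
    case False
    define m' where "m' = m - Poly_Mapping.single j 1"
    have eq: "m = m' + Poly_Mapping.single j 1"
      using False by (intro poly_mapping_eqI)
        (auto simp: m'_def lookup_add lookup_minus lookup_single when_def)
    have "Poly_Mapping.keys m' \<subseteq> Poly_Mapping.keys m"
      by (auto simp: m'_def in_keys_iff lookup_minus)
    then have "Poly_Mapping.keys m' \<subseteq> insert j J" using m by (auto simp: deg_monoms_def)
    moreover have "mdeg m' \<le> s" using m eq by (simp add: deg_monoms_def mdeg_add)
    ultimately show ?thesis using eq by (auto simp: deg_monoms_def)
  qed
next
  fix m
  assume "m \<in> deg_monoms J (Suc s) \<union> (\<lambda>m. m + Poly_Mapping.single j 1) ` deg_monoms (insert j J) s"
  then show "m \<in> deg_monoms (insert j J) (Suc s)"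
    using keys_add[of _ "Poly_Mapping.single j (1::nat)"] by (auto simp: deg_monoms_def mdeg_add)
qed

lemma deg_monoms_card:
  assumes "finite J"
  shows "finite (deg_monoms J s) \<and> card (deg_monoms J s) = (s + card J) choose card J"
  using assms
proof (induction J arbitrary: s rule: finite_induct)
  case empty
  have "deg_monoms {} s = {0}" by (auto simp: deg_monoms_def)
  then show ?case by simp
next
  case (insert j J)
  show ?case
  proof (induction s)
    case 0
    have "deg_monoms (insert j J) 0 = {0}" by (auto simp: deg_monoms_def mdeg_eq_0)
    then show ?case by simp
  next
    case (Suc s)
    let ?step = "\<lambda>m. m + Poly_Mapping.single j (1::nat)"
    have disj: "deg_monoms J (Suc s) \<inter> ?step ` deg_monoms (insert j J) s = {}"
    proof -
      have "j \<in> Poly_Mapping.keys (?step m)" for m by (simp add: in_keys_iff lookup_add)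
      then show ?thesis using insert.hyps(2) by (auto simp: deg_monoms_def)
    qed
    have inj: "inj_on ?step (deg_monoms (insert j J) s)" by (intro inj_onI) simp
    have "card (deg_monoms (insert j J) (Suc s)) =
        card (deg_monoms J (Suc s)) + card (deg_monoms (insert j J) s)"
      unfolding deg_monoms_insert_Suc[OF insert.hyps(2)]
      using insert.IH Suc.IH disj inj by (simp add: card_Un_disjoint card_image)
    also have "\<dots> = (Suc s + card (insert j J)) choose card (insert j J)"
      using insert.IH Suc.IH insert.hyps by simp
    finally show ?case
      unfolding deg_monoms_insert_Suc[OF insert.hyps(2)] using insert.IH Suc.IH by simp
  qed
qed

lemma binomial_add_le:
  "(u + G + Suc e) choose Suc e \<le> ((u + Suc e) choose Suc e) + G * ((u + G + e) choose e)"
proof (induction G)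
  case 0
  then show ?case by simp
next
  case (Suc G)
  have pascal: "(u + Suc G + Suc e) choose Suc e =
      ((u + G + Suc e) choose Suc e) + ((u + Suc G + e) choose e)"
    using binomial_Suc_Suc[of "u + G + Suc e" e] by simp
  have mono: "(u + G + e) choose e \<le> (u + Suc G + e) choose e"
    by (intro binomial_right_mono) simp
  have "(u + Suc G + Suc e) choose Suc e \<le>
      ((u + Suc e) choose Suc e) + G * ((u + G + e) choose e) + ((u + Suc G + e) choose e)"
    using Suc.IH unfolding pascal by simp
  also have "\<dots> \<le> ((u + Suc e) choose Suc e) + G * ((u + Suc G + e) choose e) + ((u + Suc G + e) choose e)"
    using mono by simp
  finally show ?case by simp
qed

text \<open>Polynomial growth of degree d in s makes a degree shift by G negligible: for
  s = (p + 1) G d + G, p copies of a full (s + d choose d) are fewer than p + 1 copies of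
  the shifted (s - G + d choose d).\<close>
lemma binomial_gap:
  fixes p G d :: nat
  defines "s \<equiv> Suc p * G * d + G"
  shows "p * ((s + d) choose d) < Suc p * ((s - G + d) choose d)"
proof (cases d)
  case 0
  then show ?thesis by (simp add: s_def)
next
  case (Suc e)
  define a where "a = (s + d) choose d"
  define b where "b = (s - G + d) choose d"
  define c where "c = (s + e) choose e"
  have ab: "a \<le> b + G * c"
    using binomial_add_le[of "Suc p * G * d" G e]
    by (simp add: a_def b_def c_def s_def Suc add.commute add.left_commute)
  have da: "d * a = (s + d) * c"
    using Suc_times_binomial[of e "s + e"] by (simp add: a_def c_def Suc)
  have c0: "c > 0" by (simp add: c_def)
  have "p * a < Suc p * b"
  proof (rule ccontr)
    assume "\<not> p * a < Suc p * b"
    then have "Suc p * a \<le> Suc p * b + Suc p * G * c"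
      using ab by (metis add_mult_distrib2 mult.assoc mult_le_mono2)
    then have "a \<le> Suc p * G * c" using \<open>\<not> p * a < Suc p * b\<close> by simp
    then have "d * a \<le> d * (Suc p * G * c)" by simp
    then have "(s + d) * c \<le> (Suc p * G * d) * c"
      unfolding da by (simp add: ac_simps)
    then have "s + d \<le> Suc p * G * d" using c0 by simp
    then show False using Suc by (simp add: s_def)
  qed
  then show ?thesis unfolding a_def b_def .
qed

subsection \<open>Coordinate planes in \<nat>^n and disjoint boxes\<close>

definition coord_plane :: "mono \<Rightarrow> nat set \<Rightarrow> mono set" where
  "coord_plane \<gamma> J = {\<gamma> + m | m. Poly_Mapping.keys m \<subseteq> J}"

lemma is_dplane_in_iff:
  "is_dplane_in n d \<delta> J P \<longleftrightarrow> J \<subseteq> {..<n} \<and> card J = d \<and> P \<subseteq> \<delta> \<and>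
     (\<exists>\<gamma>\<in>monoms n. (\<forall>j\<in>J. Poly_Mapping.lookup \<gamma> j = 0) \<and> P = coord_plane \<gamma> J)"
  unfolding is_dplane_in_def coord_plane_def ..

lemma dplane_mono: "is_dplane_in n d \<delta> J P \<Longrightarrow> \<delta> \<subseteq> \<delta>' \<Longrightarrow> is_dplane_in n d \<delta>' J P"
  unfolding is_dplane_in_def by blast

lemma coord_plane_lookup_outside:
  assumes "\<alpha> \<in> coord_plane \<gamma> J" "l \<notin> J"
  shows "Poly_Mapping.lookup \<alpha> l = Poly_Mapping.lookup \<gamma> l"
  using assms by (auto simp: coord_plane_def lookup_add in_keys_iff)

lemma coord_plane_directions:
  "J = {j. \<exists>a\<in>coord_plane \<gamma> J. \<exists>b\<in>coord_plane \<gamma> J.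
           Poly_Mapping.lookup a j \<noteq> Poly_Mapping.lookup b j}"
proof (intro equalityI subsetI)
  fix j assume j: "j \<in> J"
  have "\<gamma> + 0 \<in> coord_plane \<gamma> J" "\<gamma> + Poly_Mapping.single j 1 \<in> coord_plane \<gamma> J"
    using j unfolding coord_plane_def by force+
  moreover have "Poly_Mapping.lookup (\<gamma> + 0) j \<noteq> Poly_Mapping.lookup (\<gamma> + Poly_Mapping.single j 1) j"
    by (simp add: lookup_add)
  ultimately show "j \<in> {j. \<exists>a\<in>coord_plane \<gamma> J. \<exists>b\<in>coord_plane \<gamma> J.
           Poly_Mapping.lookup a j \<noteq> Poly_Mapping.lookup b j}" by blast
next
  fix j assume "j \<in> {j. \<exists>a\<in>coord_plane \<gamma> J. \<exists>b\<in>coord_plane \<gamma> J.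
           Poly_Mapping.lookup a j \<noteq> Poly_Mapping.lookup b j}"
  then obtain a b where "a \<in> coord_plane \<gamma> J" "b \<in> coord_plane \<gamma> J"
    "Poly_Mapping.lookup a j \<noteq> Poly_Mapping.lookup b j" by blast
  then show "j \<in> J" using coord_plane_lookup_outside[of a \<gamma> J j] coord_plane_lookup_outside[of b \<gamma> J j]
    by (cases "j \<in> J") auto
qed

lemma dplane_dir_unique:
  assumes "is_dplane_in n d \<delta> J Q" "is_dplane_in n d \<delta>' J' Q"
  shows "J = J'"
proof -
  have dir: "J = {j. \<exists>a\<in>Q. \<exists>b\<in>Q. Poly_Mapping.lookup a j \<noteq> Poly_Mapping.lookup b j}"
    if h: "is_dplane_in n d \<delta> J Q" for \<delta> J
  proof -
    obtain \<gamma> where "Q = coord_plane \<gamma> J" using h unfolding is_dplane_in_iff by blast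
    then show ?thesis using coord_plane_directions[of J \<gamma>] by simp
  qed
  show ?thesis using dir[OF assms(1)] dir[OF assms(2)] by simp
qed

lemma coord_planes_meet_deep:
  assumes fin: "finite J2" and card: "card J1 = card J2"
    and \<gamma>1: "\<forall>j\<in>J1. Poly_Mapping.lookup \<gamma>1 j = 0" and \<gamma>2: "\<forall>j\<in>J2. Poly_Mapping.lookup \<gamma>2 j = 0"
    and small: "\<forall>i. Poly_Mapping.lookup \<gamma>2 i < K"
    and \<alpha>1: "\<alpha> \<in> coord_plane \<gamma>1 J1" and \<alpha>2: "\<alpha> \<in> coord_plane \<gamma>2 J2"
    and deep: "\<forall>l\<in>J1. K \<le> Poly_Mapping.lookup \<alpha> l"
  shows "\<gamma>1 = \<gamma>2 \<and> J1 = J2"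
proof -
  have "J1 \<subseteq> J2"
  proof
    fix l assume "l \<in> J1"
    show "l \<in> J2"
    proof (rule ccontr)
      assume "l \<notin> J2"
      with \<alpha>2 have "Poly_Mapping.lookup \<alpha> l = Poly_Mapping.lookup \<gamma>2 l"
        by (rule coord_plane_lookup_outside)
      moreover have "K \<le> Poly_Mapping.lookup \<alpha> l" using deep \<open>l \<in> J1\<close> by blast
      ultimately show False using small by (metis not_le)
    qed
  qed
  then have J: "J1 = J2" using card fin by (simp add: card_subset_eq)
  have "Poly_Mapping.lookup \<gamma>1 l = Poly_Mapping.lookup \<gamma>2 l" for l
    using \<gamma>1 \<gamma>2 coord_plane_lookup_outside[OF \<alpha>1] coord_plane_lookup_outside[OF \<alpha>2] J
    by (cases "l \<in> J2") auto
  then show ?thesis using J by (simp add: poly_mapping_eqI)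
qed

definition shift :: "nat set \<Rightarrow> nat \<Rightarrow> mono" where
  "shift J K = (\<Sum>j\<in>J. Poly_Mapping.single j K)"

lemma lookup_shift: "finite J \<Longrightarrow> Poly_Mapping.lookup (shift J K) i = (if i \<in> J then K else 0)"
  by (simp add: shift_def lookup_sum lookup_single when_def)

definition box :: "mono \<Rightarrow> nat set \<Rightarrow> nat \<Rightarrow> nat \<Rightarrow> mono set" where
  "box \<gamma> J K t = (\<lambda>m. \<gamma> + shift J K + m) ` deg_monoms J t"

lemma box_props:
  assumes "finite J"
  shows "box \<gamma> J K t \<subseteq> coord_plane \<gamma> J"
    and "\<forall>\<alpha>\<in>box \<gamma> J K t. \<forall>l\<in>J. K \<le> Poly_Mapping.lookup \<alpha> l"
    and "\<forall>\<alpha>\<in>box \<gamma> J K t. mdeg \<alpha> \<le> mdeg \<gamma> + K * card J + t"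
    and "finite (box \<gamma> J K t)" "card (box \<gamma> J K t) = (t + card J) choose card J"
proof -
  have ksh: "Poly_Mapping.keys (shift J K) \<subseteq> J"
    using lookup_shift[OF assms] by (auto simp: in_keys_iff split: if_splits)
  show "box \<gamma> J K t \<subseteq> coord_plane \<gamma> J"
  proof
    fix \<alpha> assume "\<alpha> \<in> box \<gamma> J K t"
    then obtain m where m: "Poly_Mapping.keys m \<subseteq> J" "\<alpha> = \<gamma> + (shift J K + m)"
      unfolding box_def deg_monoms_def by (auto simp: add.assoc)
    have "Poly_Mapping.keys (shift J K + m) \<subseteq> J"
      using ksh m(1) keys_add[of "shift J K" m] by blast
    then show "\<alpha> \<in> coord_plane \<gamma> J" unfolding coord_plane_def using m(2) by blast
  qed
  show "\<forall>\<alpha>\<in>box \<gamma> J K t. \<forall>l\<in>J. K \<le> Poly_Mapping.lookup \<alpha> l"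
    unfolding box_def by (auto simp: lookup_add lookup_shift[OF assms])
  have "mdeg (shift J K) = K * card J" by (simp add: shift_def mdeg_sum)
  then show "\<forall>\<alpha>\<in>box \<gamma> J K t. mdeg \<alpha> \<le> mdeg \<gamma> + K * card J + t"
    unfolding box_def deg_monoms_def by (auto simp: mdeg_add)
  have "inj_on (\<lambda>m. \<gamma> + shift J K + m) (deg_monoms J t)" by (simp add: inj_on_def)
  then show "finite (box \<gamma> J K t)" "card (box \<gamma> J K t) = (t + card J) choose card J"
    unfolding box_def using deg_monoms_card[OF assms] by (simp_all add: card_image)
qed

lemma dplane_coord_rep:
  assumes "is_dplane_in n d \<delta> J Q"
  shows "finite J" "card J = d" "\<exists>\<gamma>. (\<forall>j\<in>J. Poly_Mapping.lookup \<gamma> j = 0) \<and> Q = coord_plane \<gamma> J"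
proof -
  have "J \<subseteq> {..<n}" using assms unfolding is_dplane_in_def by blast
  then show "finite J" by (rule finite_subset) simp
  show "card J = d" "\<exists>\<gamma>. (\<forall>j\<in>J. Poly_Mapping.lookup \<gamma> j = 0) \<and> Q = coord_plane \<gamma> J"
    using assms unfolding is_dplane_in_iff by blast+
qed

lemma dplanes_disjoint_boxes:
  assumes fin: "finite QQ" and QQ: "\<forall>Q\<in>QQ. \<exists>J. is_dplane_in n d \<delta> J Q"
  obtains G where "\<And>s. G \<le> s \<Longrightarrow> \<exists>B. (\<forall>Q\<in>QQ. B Q \<subseteq> Q \<and> finite (B Q) \<and>
      (\<forall>\<alpha>\<in>B Q. mdeg \<alpha> \<le> s) \<and> card (B Q) = (s - G + d) choose d) \<and>
      (\<forall>Q1\<in>QQ. \<forall>Q2\<in>QQ. Q1 \<noteq> Q2 \<longrightarrow> B Q1 \<inter> B Q2 = {})"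
proof -
  obtain J where J: "\<forall>Q\<in>QQ. is_dplane_in n d \<delta> (J Q) Q"
    using bchoice[OF QQ] by blast
  define \<gamma> where "\<gamma> Q = (SOME \<gamma>. (\<forall>j\<in>J Q. Poly_Mapping.lookup \<gamma> j = 0) \<and> Q = coord_plane \<gamma> (J Q))"
    for Q
  have rep: "finite (J Q)" "card (J Q) = d" if "Q \<in> QQ" for Q
    using dplane_coord_rep(1,2)[OF J[rule_format, OF that]] .
  have rep_\<gamma>: "(\<forall>j\<in>J Q. Poly_Mapping.lookup (\<gamma> Q) j = 0) \<and> Q = coord_plane (\<gamma> Q) (J Q)"
    if "Q \<in> QQ" for Q
    unfolding \<gamma>_def using dplane_coord_rep(3)[OF J[rule_format, OF that]] by (rule someI_ex)
  have rep_zero: "\<forall>j\<in>J Q. Poly_Mapping.lookup (\<gamma> Q) j = 0" if "Q \<in> QQ" for Q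
    using rep_\<gamma>[OF that] by (rule conjunct1)
  have rep_eq: "Q = coord_plane (\<gamma> Q) (J Q)" if "Q \<in> QQ" for Q
    using rep_\<gamma>[OF that] by (rule conjunct2)
  define K where "K = Suc (\<Sum>Q\<in>QQ. mdeg (\<gamma> Q))"
  have \<gamma>K: "mdeg (\<gamma> Q) < K" if "Q \<in> QQ" for Q
    unfolding K_def using fin that by (intro le_imp_less_Suc member_le_sum) auto
  show thesis
  proof (rule that[of "K * Suc d"])
    fix s assume s: "K * Suc d \<le> s"
    define B where "B Q = box (\<gamma> Q) (J Q) K (s - K * Suc d)" for Q
    have boxes: "B Q \<subseteq> Q \<and> finite (B Q) \<and> (\<forall>\<alpha>\<in>B Q. mdeg \<alpha> \<le> s) \<and>
        card (B Q) = (s - K * Suc d + d) choose d" if Q: "Q \<in> QQ" for Q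
    proof -
      note fin = rep(1)[OF Q] and card = rep(2)[OF Q] and Qeq = rep_eq[OF Q]
      have deg: "mdeg (\<gamma> Q) + K * card (J Q) + (s - K * Suc d) \<le> s" using \<gamma>K[OF Q] s card by simp
      have "\<forall>\<alpha>\<in>B Q. mdeg \<alpha> \<le> s"
      proof
        fix \<alpha> assume "\<alpha> \<in> B Q"
        then have "mdeg \<alpha> \<le> mdeg (\<gamma> Q) + K * card (J Q) + (s - K * Suc d)"
          using box_props(3)[OF fin] unfolding B_def by blast
        then show "mdeg \<alpha> \<le> s" using deg by linarith
      qed
      moreover have "B Q \<subseteq> coord_plane (\<gamma> Q) (J Q)"
        unfolding B_def by (rule box_props(1)[OF fin])
      then have "B Q \<subseteq> Q" by (simp only: Qeq[symmetric])
      ultimately show ?thesis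
        using box_props(4,5)[OF fin, of "\<gamma> Q" K "s - K * Suc d"] card unfolding B_def by simp
    qed
    have disjoint: "B Q1 \<inter> B Q2 = {}" if Q: "Q1 \<in> QQ" "Q2 \<in> QQ" "Q1 \<noteq> Q2" for Q1 Q2
    proof (rule ccontr)
      assume "B Q1 \<inter> B Q2 \<noteq> {}"
      then obtain \<alpha> where \<alpha>: "\<alpha> \<in> B Q1" "\<alpha> \<in> B Q2" by blast
      have small: "\<forall>i. Poly_Mapping.lookup (\<gamma> Q2) i < K"
        using le_less_trans[OF lookup_le_mdeg \<gamma>K[OF Q(2)]] by blast
      have in1: "\<alpha> \<in> coord_plane (\<gamma> Q1) (J Q1)" and deep: "\<forall>l\<in>J Q1. K \<le> Poly_Mapping.lookup \<alpha> l"
        using box_props(1,2)[OF rep(1)[OF Q(1)], of "\<gamma> Q1" K] \<alpha>(1) unfolding B_def by blast+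
      have in2: "\<alpha> \<in> coord_plane (\<gamma> Q2) (J Q2)"
        using box_props(1)[OF rep(1)[OF Q(2)], of "\<gamma> Q2" K] \<alpha>(2) unfolding B_def by blast
      have eq: "\<gamma> Q1 = \<gamma> Q2 \<and> J Q1 = J Q2"
        using coord_planes_meet_deep[OF rep(1)[OF Q(2)] _ rep_zero[OF Q(1)] rep_zero[OF Q(2)]
            small in1 in2 deep] rep(2)[OF Q(1)] rep(2)[OF Q(2)] by simp
      have "Q1 = coord_plane (\<gamma> Q1) (J Q1)" by (rule rep_eq[OF Q(1)])
      also have "\<dots> = coord_plane (\<gamma> Q2) (J Q2)" using eq by simp
      also have "\<dots> = Q2" by (rule rep_eq[OF Q(2), symmetric])
      finally have "Q1 = Q2" .
      then show False using Q(3) by contradiction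
    qed
    show "\<exists>B. (\<forall>Q\<in>QQ. B Q \<subseteq> Q \<and> finite (B Q) \<and>
      (\<forall>\<alpha>\<in>B Q. mdeg \<alpha> \<le> s) \<and> card (B Q) = (s - K * Suc d + d) choose d) \<and>
      (\<forall>Q1\<in>QQ. \<forall>Q2\<in>QQ. Q1 \<noteq> Q2 \<longrightarrow> B Q1 \<inter> B Q2 = {})"
      using boxes disjoint by (intro exI[of _ B]) blast
  qed
qed

lemma term_order_irrefl: "term_order n ord \<Longrightarrow> a \<in> monoms n \<Longrightarrow> \<not> ord a a"
  unfolding term_order_def by blast

lemma term_order_trans:
  "term_order n ord \<Longrightarrow> a \<in> monoms n \<Longrightarrow> b \<in> monoms n \<Longrightarrow> c \<in> monoms n \<Longrightarrow>
    ord a b \<Longrightarrow> ord b c \<Longrightarrow> ord a c"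
  unfolding term_order_def by blast

lemma term_order_total:
  "term_order n ord \<Longrightarrow> a \<in> monoms n \<Longrightarrow> b \<in> monoms n \<Longrightarrow> a \<noteq> b \<Longrightarrow> ord a b \<or> ord b a"
  unfolding term_order_def by blast

lemma term_order_max_exists:
  assumes to: "term_order n ord" and "finite K" "K \<noteq> {}" "K \<subseteq> monoms n"
  shows "\<exists>m\<in>K. \<forall>m'\<in>K. m' \<noteq> m \<longrightarrow> ord m' m"
  using assms(2-4)
proof (induction K rule: finite_ne_induct)
  case (singleton x)
  then show ?case by simp
next
  case (insert x F)
  then obtain m where m: "m \<in> F" "\<forall>m'\<in>F. m' \<noteq> m \<longrightarrow> ord m' m" by auto
  have mon: "x \<in> monoms n" "m \<in> monoms n" "F \<subseteq> monoms n" using insert.prems m by auto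
  show ?case
  proof (cases "ord m x")
    case True
    have "ord m' x" if "m' \<in> F" for m'
      using that m mon True term_order_trans[OF to _ mon(2) mon(1)] by (cases "m' = m") auto
    then show ?thesis by blast
  next
    case False
    then have "ord x m" using term_order_total[OF to mon(1) mon(2)] m insert.hyps by blast
    then show ?thesis using m by blast
  qed
qed

lemma LE_in_keys:
  assumes to: "term_order n ord" and f: "f \<in> polys n" "f \<noteq> 0"
  shows "LE ord f \<in> Poly_Mapping.keys f"
proof -
  have ne: "Poly_Mapping.keys f \<noteq> {}"
    using f(2) by (metis keys_zero poly_mapping_eqI lookup_zero not_in_keys_iff_lookup_eq_zero empty_iff)
  have sub: "Poly_Mapping.keys f \<subseteq> monoms n" using f(1) by (auto simp: polys_def)
  obtain m where m: "m \<in> Poly_Mapping.keys f" "\<forall>m'\<in>Poly_Mapping.keys f. m' \<noteq> m \<longrightarrow> ord m' m"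
    using term_order_max_exists[OF to finite_keys ne sub] by blast
  have uniq: "m2 = m"
    if "m2 \<in> Poly_Mapping.keys f" "\<forall>m'\<in>Poly_Mapping.keys f. m' \<noteq> m2 \<longrightarrow> ord m' m2" for m2
  proof (rule ccontr)
    assume "m2 \<noteq> m"
    then have "ord m2 m" "ord m m2" using m that by auto
    moreover have "m \<in> monoms n" "m2 \<in> monoms n" using sub m that by auto
    ultimately show False using term_order_trans[OF to] term_order_irrefl[OF to] by blast
  qed
  have "\<exists>!m. m \<in> Poly_Mapping.keys f \<and> (\<forall>m'\<in>Poly_Mapping.keys f. m' \<noteq> m \<longrightarrow> ord m' m)"
    using m uniq by blast
  then show ?thesis unfolding LE_def by (rule theI'[THEN conjunct1])
qed

text \<open>D is antitone in the ideal, hence monotone in the point set.\<close>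
lemma Dset_mono: "A \<subseteq> B \<Longrightarrow> Dset n ord A \<subseteq> Dset n ord B"
  unfolding Dset_def Cset_def vanishing_ideal_def by blast

lemma dplane_in_larger_Dset:
  "is_dplane_in n d (Dset n ord B) J Q \<Longrightarrow> B \<subseteq> A \<Longrightarrow> is_dplane_in n d (Dset n ord A) J Q"
  using Dset_mono dplane_mono by metis

subsection \<open>Standard monomials as functions\<close>

definition mon :: "mono \<Rightarrow> (nat \<Rightarrow> 'k::comm_semiring_1) \<Rightarrow> 'k" where
  "mon a x = (\<Prod>i\<in>Poly_Mapping.keys a. x i ^ Poly_Mapping.lookup a i)"

lemma eval_mon: "eval p x = (\<Sum>m\<in>Poly_Mapping.keys p. Poly_Mapping.lookup p m * mon m x)"
  by (simp add: eval_def mon_def)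

lemma mon_superset:
  assumes "finite K" "Poly_Mapping.keys a \<subseteq> K"
  shows "mon a x = (\<Prod>i\<in>K. x i ^ Poly_Mapping.lookup a i)"
  unfolding mon_def
  by (rule prod.mono_neutral_left) (use assms in \<open>auto simp: in_keys_iff\<close>)

lemma mon_add_single: "mon (a + Poly_Mapping.single i 1) x = mon a x * x i"
proof -
  let ?K = "insert i (Poly_Mapping.keys a)"
  have "mon (a + Poly_Mapping.single i 1) x =
      (\<Prod>k\<in>?K. x k ^ Poly_Mapping.lookup (a + Poly_Mapping.single i 1) k)"
    by (rule mon_superset) (use keys_add[of a "Poly_Mapping.single i (1::nat)"] in auto)
  also have "\<dots> = (\<Prod>k\<in>?K. x k ^ Poly_Mapping.lookup a k * (if k = i then x k else 1))"
    by (rule prod.cong) (auto simp: lookup_add lookup_single when_def mult.commute)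
  also have "\<dots> = (\<Prod>k\<in>?K. x k ^ Poly_Mapping.lookup a k) * x i"
    by (simp add: prod.distrib)
  also have "\<dots> = mon a x * x i"
    using mon_superset[of ?K a x] by force
  finally show ?thesis .
qed

text \<open>Standard monomials are linearly independent on A: a vanishing combination of exponents
  in D(A) would be a polynomial in I(A) whose leading exponent lies in D(A).\<close>
lemma standard_monomials_independent:
  fixes A :: "(nat \<Rightarrow> 'k::comm_ring_1) set"
  assumes to: "term_order n tord" and finM: "finite M" and MD: "M \<subseteq> Dset n tord A"
    and van: "\<forall>x\<in>A. (\<Sum>a\<in>M. c a * mon a x) = 0"
  shows "\<forall>a\<in>M. c a = 0"
proof -
  define f :: "'k mpoly" where "f = Abs_poly_mapping (\<lambda>a. if a \<in> M then c a else 0)"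
  have "finite {a. (if a \<in> M then c a else 0) \<noteq> 0}"
    using finM by (rule rev_finite_subset) auto
  then have lf: "Poly_Mapping.lookup f = (\<lambda>a. if a \<in> M then c a else 0)"
    unfolding f_def by simp
  have kf: "Poly_Mapping.keys f \<subseteq> M" by (auto simp: in_keys_iff lf split: if_splits)
  have fpoly: "f \<in> polys n" using kf MD by (auto simp: polys_def Dset_def)
  have "eval f x = (\<Sum>a\<in>M. Poly_Mapping.lookup f a * mon a x)" for x
    unfolding eval_mon by (rule sum.mono_neutral_left) (use finM kf in \<open>auto simp: in_keys_iff\<close>)
  then have "f \<in> vanishing_ideal n A"
    using fpoly van by (simp add: vanishing_ideal_def lf)
  have "f = 0"
  proof (rule ccontr)
    assume "f \<noteq> 0"
    then have "LE tord f \<in> Cset n tord A"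
      unfolding Cset_def using \<open>f \<in> vanishing_ideal n A\<close> by blast
    moreover have "LE tord f \<in> M" using LE_in_keys[OF to fpoly \<open>f \<noteq> 0\<close>] kf by blast
    ultimately show False using MD by (auto simp: Dset_def)
  qed
  then show ?thesis using lf by (metis lookup_zero)
qed

global_interpretation fun_space: vector_space "\<lambda>(c::'k::field) (f::'a \<Rightarrow> 'k). \<lambda>x. c * f x"
  by unfold_locales (auto simp: fun_eq_iff algebra_simps)

lemma sum_apply_fun: "(sum f A) x = sum (\<lambda>a. f a x) A"
  by (induction A rule: infinite_finite_induct) auto

lemma fun_space_subspace_preimage:
  fixes L :: "('a \<Rightarrow> 'k::field) \<Rightarrow> ('b \<Rightarrow> 'k)"
  assumes "\<And>x y. L (x + y) = L x + L y" "\<And>c x. L (\<lambda>z. c * x z) = (\<lambda>z. c * L x z)" "L 0 = 0"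
  shows "fun_space.subspace {x. L x \<in> fun_space.span T}"
  unfolding fun_space.subspace_def
  using assms fun_space.span_zero fun_space.span_add fun_space.span_scale by auto

definition param_monos :: "nat \<Rightarrow> nat \<Rightarrow> ((nat \<Rightarrow> 'k::comm_semiring_1) \<Rightarrow> 'k) set" where
  "param_monos d s = mon ` deg_monoms {..<d} s"

lemma param_monos_mono: "s \<le> s' \<Longrightarrow> param_monos d s \<subseteq> param_monos d s'"
  unfolding param_monos_def using deg_monoms_mono by blast

lemma span_mult_param:
  fixes f :: "(nat \<Rightarrow> 'k::field) \<Rightarrow> 'k"
  assumes "f \<in> fun_space.span (param_monos d s)" "k < d"
  shows "(\<lambda>t. f t * t k) \<in> fun_space.span (param_monos d (Suc s))"
  using assms(1)
proof (induction rule: fun_space.span_induct)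
  case base
  show ?case by (rule fun_space_subspace_preimage) (auto simp: fun_eq_iff algebra_simps)
next
  case (step x)
  then obtain b where b: "b \<in> deg_monoms {..<d} s" "x = mon b" by (auto simp: param_monos_def)
  have "b + Poly_Mapping.single k 1 \<in> deg_monoms {..<d} (Suc s)"
    using b(1) assms(2) keys_add[of b "Poly_Mapping.single k (1::nat)"]
    by (auto simp: deg_monoms_def mdeg_add)
  moreover have "(\<lambda>t. x t * t k) = mon (b + Poly_Mapping.single k 1)"
    by (intro ext) (simp only: b(2) mon_add_single)
  ultimately show ?case by (auto simp: param_monos_def intro!: fun_space.span_base)
qed

lemma mon_param_span:
  fixes p :: "nat \<Rightarrow> 'k::field" and v :: "nat \<Rightarrow> nat \<Rightarrow> 'k"
  shows "(\<lambda>t. mon a (\<lambda>j. p j + (\<Sum>i<d. t i * v i j))) \<in> fun_space.span (param_monos d (mdeg a))"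
proof (induction "mdeg a" arbitrary: a)
  case 0
  then have "a = 0" by (simp add: mdeg_eq_0)
  moreover have "(0::mono) \<in> deg_monoms {..<d} 0" by (simp add: deg_monoms_def)
  ultimately show ?case
    by (auto simp: param_monos_def mon_def intro!: fun_space.span_base image_eqI[of _ _ 0])
next
  case (Suc k)
  obtain i b where ab: "a = b + Poly_Mapping.single i 1" and bk: "mdeg b = k"
    using mdeg_Suc_decomp[of a k] Suc.hyps(2) by metis
  define F where "F = (\<lambda>t. mon b (\<lambda>j. p j + (\<Sum>i<d. t i * v i j)))"
  have F: "F \<in> fun_space.span (param_monos d k)" using Suc.hyps(1)[of b] bk by (simp add: F_def)
  then have Fs: "F \<in> fun_space.span (param_monos d (Suc k))"
    using fun_space.span_mono[OF param_monos_mono[of k "Suc k" d]] by auto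
  have eq: "(\<lambda>t. mon a (\<lambda>j. p j + (\<Sum>i<d. t i * v i j))) =
      (\<lambda>x. p i * F x) + (\<Sum>l<d. (\<lambda>x. v l i * (\<lambda>t. F t * t l) x))"
    unfolding ab mon_add_single
    by (simp add: fun_eq_iff sum_apply_fun F_def algebra_simps sum_distrib_left)
  have "(\<lambda>x. p i * F x) \<in> fun_space.span (param_monos d (Suc k))"
    using Fs by (rule fun_space.span_scale)
  moreover have "(\<Sum>l<d. (\<lambda>x. v l i * (\<lambda>t. F t * t l) x)) \<in> fun_space.span (param_monos d (Suc k))"
    by (intro fun_space.span_sum fun_space.span_scale span_mult_param[OF F]) simp
  ultimately show ?case unfolding eq using Suc.hyps(2) by (auto intro: fun_space.span_add)
qed

subsection \<open>At most #\<P> d-planes in D(\<Union>\<P>)\<close>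

lemma affine_dplane_param:
  assumes "affine_dplane n d (S :: (nat \<Rightarrow> 'k::field) set)"
  shows "\<exists>q. (\<exists>p v. q = (\<lambda>t j. p j + (\<Sum>i<d. t i * v i j))) \<and> S = range q"
  using assms unfolding affine_dplane_def by blast

text \<open>Functions on pairs (S, t) (a plane of \<P> and a parameter) that are a parameter monomial of
  degree \<le> s on one plane and zero elsewhere; they span a space of dimension \<le> #\<P> (s+d choose d).\<close>
definition piecewise_monos :: "'s set \<Rightarrow> nat \<Rightarrow> nat \<Rightarrow> ('s \<times> (nat \<Rightarrow> 'k::comm_semiring_1) \<Rightarrow> 'k) set" where
  "piecewise_monos P d s =
     (\<lambda>(S0, b). \<lambda>z. if fst z = S0 then mon b (snd z) else 0) ` (P \<times> deg_monoms {..<d} s)"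

lemma piecewise_span:
  fixes f :: "(nat \<Rightarrow> 'k::field) \<Rightarrow> 'k"
  assumes "f \<in> fun_space.span (param_monos d s)" "S0 \<in> P"
  shows "(\<lambda>z. if fst z = S0 then f (snd z) else 0) \<in> fun_space.span (piecewise_monos P d s)"
  using assms(1)
proof (induction rule: fun_space.span_induct)
  case base
  show ?case by (rule fun_space_subspace_preimage) (auto simp: fun_eq_iff)
next
  case (step x)
  then obtain b where b: "b \<in> deg_monoms {..<d} s" "x = mon b" by (auto simp: param_monos_def)
  have "(\<lambda>z. if fst z = S0 then x (snd z) else 0) \<in> piecewise_monos P d s"
    unfolding piecewise_monos_def using b assms(2) by (auto intro!: image_eqI[of _ _ "(S0, b)"])
  then show ?case by (rule fun_space.span_base)
qed

text \<open>Hilbert-function bound: A = \<Union>\<P> contains at most #\<P> (s+d choose d) standard monomials of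
  degree \<le> s, since they are independent on A while spanning, plane by plane, only
  polynomials of degree \<le> s in d parameters.\<close>
lemma card_low_degree_standard_monomials:
  fixes P :: "(nat \<Rightarrow> 'k::field) set set"
  assumes finP: "finite P" and to: "term_order n tord" and planes: "\<forall>S\<in>P. affine_dplane n d S"
    and finM: "finite M" and MD: "M \<subseteq> Dset n tord (\<Union>P)" and Mdeg: "\<forall>a\<in>M. mdeg a \<le> s"
  shows "card M \<le> card P * ((s + d) choose d)"
proof -
  obtain qq where qq: "\<forall>S\<in>P. (\<exists>p v. qq S = (\<lambda>t j. p j + (\<Sum>i<d. t i * v i j))) \<and> S = range (qq S)"
  proof -
    have "\<forall>S\<in>P. \<exists>q. (\<exists>p v. q = (\<lambda>t j. p j + (\<Sum>i<d. t i * v i j))) \<and> S = range q"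
      using planes affine_dplane_param by blast
    then have "\<exists>qq. \<forall>S\<in>P. (\<exists>p v. qq S = (\<lambda>t j. p j + (\<Sum>i<d. t i * v i j))) \<and> S = range (qq S)"
      by (rule bchoice)
    then show thesis using that by blast
  qed
  let ?H = "piecewise_monos P d s :: ((nat \<Rightarrow> 'k) set \<times> (nat \<Rightarrow> 'k) \<Rightarrow> 'k) set"
  define G where "G a = (\<lambda>z. if fst z \<in> P then mon a (qq (fst z) (snd z)) else (0::'k))" for a
  have finT: "finite (deg_monoms {..<d} s)" using deg_monoms_card[of "{..<d}" s] by simp
  have finH: "finite ?H" unfolding piecewise_monos_def using finP finT by simp
  have "card ?H \<le> card (P \<times> deg_monoms {..<d} s)"
    unfolding piecewise_monos_def by (rule card_image_le) (simp add: finP finT)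
  also have "\<dots> = card P * ((s + d) choose d)"
    using deg_monoms_card[of "{..<d}" s] by (simp add: card_cartesian_product)
  finally have cardH: "card ?H \<le> card P * ((s + d) choose d)" .
  have Gspan: "G a \<in> fun_space.span ?H" if a: "a \<in> M" for a
  proof -
    have eq: "G a = (\<Sum>S0\<in>P. (\<lambda>z. if fst z = S0 then (\<lambda>t. mon a (qq S0 t)) (snd z) else 0))"
      by (rule ext) (simp add: sum_apply_fun G_def finP sum.delta')
    show ?thesis unfolding eq
    proof (rule fun_space.span_sum)
      fix S0 assume S0: "S0 \<in> P"
      then obtain p v where q: "qq S0 = (\<lambda>t j. p j + (\<Sum>i<d. t i * v i j))" using qq by blast
      have "(\<lambda>t. mon a (qq S0 t)) \<in> fun_space.span (param_monos d (mdeg a))"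
        unfolding q by (rule mon_param_span)
      then have "(\<lambda>t. mon a (qq S0 t)) \<in> fun_space.span (param_monos d s)"
        using fun_space.span_mono[OF param_monos_mono[of "mdeg a" s d]] Mdeg a by auto
      then show "(\<lambda>z. if fst z = S0 then (\<lambda>t. mon a (qq S0 t)) (snd z) else 0) \<in> fun_space.span ?H"
        using S0 by (rule piecewise_span)
    qed
  qed
  have indep: "\<forall>a\<in>M. c a = 0" if "\<forall>z. (\<Sum>a\<in>M. c a * G a z) = 0" for c
  proof (rule standard_monomials_independent[OF to finM MD])
    show "\<forall>x\<in>\<Union>P. (\<Sum>a\<in>M. c a * mon a x) = 0"
    proof
      fix x assume "x \<in> \<Union>P"
      then obtain S t where "S \<in> P" "x = qq S t" using qq by blast
      then show "(\<Sum>a\<in>M. c a * mon a x) = 0" using that[rule_format, of "(S, t)"] by (simp add: G_def)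
    qed
  qed
  have inj: "inj_on G M"
  proof (rule inj_onI, rule ccontr)
    fix a b assume ab: "a \<in> M" "b \<in> M" "G a = G b" "a \<noteq> b"
    define c where "c x = (if x = a then 1 else if x = b then -1 else (0::'k))" for x
    have "(\<Sum>x\<in>M. c x * G x z) = 0" for z
    proof -
      have "(\<Sum>x\<in>M. c x * G x z) = (\<Sum>x\<in>M. (if x = a then G a z else 0) - (if x = b then G b z else 0))"
        by (rule sum.cong) (auto simp: c_def ab(4))
      also have "\<dots> = 0" using ab finM by (simp add: sum_subtractf)
      finally show ?thesis .
    qed
    then have "c a = 0" using indep ab(1) by blast
    then show False by (simp add: c_def)
  qed
  have "fun_space.independent (G ` M)"
  proof (rule fun_space.independent_if_scalars_zero)
    show "finite (G ` M)" using finM by simp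
  next
    fix f x assume sum0: "(\<Sum>y\<in>G ` M. (\<lambda>z. f y * y z)) = 0" and x: "x \<in> G ` M"
    have "\<forall>z. (\<Sum>a\<in>M. f (G a) * G a z) = 0"
      using sum0 inj by (simp add: sum.reindex fun_eq_iff sum_apply_fun)
    then have "\<forall>a\<in>M. f (G a) = 0" by (rule indep)
    then show "f x = 0" using x by blast
  qed
  then have "card (G ` M) \<le> card ?H"
    using fun_space.independent_span_bound[OF finH] Gspan by blast
  then show ?thesis using cardH card_image[OF inj] by linarith
qed

text \<open>Any finite family of d-planes in D(\<Union>\<P>) has at most #\<P> members: otherwise their disjoint
  boxes would give more low-degree standard monomials than the Hilbert-function bound allows.\<close>
lemma finite_dplane_family_bound:
  fixes P :: "(nat \<Rightarrow> 'k::field) set set"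
  assumes finP: "finite P" and to: "term_order n tord" and planes: "\<forall>S\<in>P. affine_dplane n d S"
    and finQ: "finite QQ" and QQ: "\<forall>Q\<in>QQ. \<exists>J. is_dplane_in n d (Dset n tord (\<Union>P)) J Q"
  shows "card QQ \<le> card P"
proof (rule ccontr)
  assume "\<not> ?thesis"
  then have big: "Suc (card P) \<le> card QQ" by simp
  obtain G where boxes: "\<And>s. G \<le> s \<Longrightarrow> \<exists>B. (\<forall>Q\<in>QQ. B Q \<subseteq> Q \<and> finite (B Q) \<and>
      (\<forall>\<alpha>\<in>B Q. mdeg \<alpha> \<le> s) \<and> card (B Q) = (s - G + d) choose d) \<and>
      (\<forall>Q1\<in>QQ. \<forall>Q2\<in>QQ. Q1 \<noteq> Q2 \<longrightarrow> B Q1 \<inter> B Q2 = {})"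
    using dplanes_disjoint_boxes[OF finQ QQ] by blast
  define s where "s = Suc (card P) * G * d + G"
  obtain B where B: "\<forall>Q\<in>QQ. B Q \<subseteq> Q \<and> finite (B Q) \<and>
      (\<forall>\<alpha>\<in>B Q. mdeg \<alpha> \<le> s) \<and> card (B Q) = (s - G + d) choose d"
    and disj: "\<forall>Q1\<in>QQ. \<forall>Q2\<in>QQ. Q1 \<noteq> Q2 \<longrightarrow> B Q1 \<inter> B Q2 = {}"
    using boxes[of s] unfolding s_def by auto
  define M where "M = (\<Union>Q\<in>QQ. B Q)"
  have "card M = (\<Sum>Q\<in>QQ. card (B Q))"
    unfolding M_def using finQ B disj by (intro card_UN_disjoint) auto
  also have "\<dots> = card QQ * ((s - G + d) choose d)" using B by simp
  finally have lower: "Suc (card P) * ((s - G + d) choose d) \<le> card M"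
    using big mult_le_mono1 by metis
  have "finite M" using finQ B by (simp add: M_def)
  moreover have "Q \<subseteq> Dset n tord (\<Union>P)" if "Q \<in> QQ" for Q
    using QQ that unfolding is_dplane_in_def by blast
  then have "M \<subseteq> Dset n tord (\<Union>P)" using B unfolding M_def by blast
  moreover have "\<forall>a\<in>M. mdeg a \<le> s" using B by (simp add: M_def)
  ultimately have "card M \<le> card P * ((s + d) choose d)"
    by (rule card_low_degree_standard_monomials[OF finP to planes])
  then show False using lower binomial_gap[of "card P" G d] unfolding s_def by linarith
qed

lemma card_dplanes_in_Dset_le:
  fixes P :: "(nat \<Rightarrow> 'k::field) set set"
  assumes finP: "finite P" and to: "term_order n tord" and planes: "\<forall>S\<in>P. affine_dplane n d S"
  defines "PP \<equiv> {Q. \<exists>J. is_dplane_in n d (Dset n tord (\<Union>P)) J Q}"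
  shows "finite PP \<and> card PP \<le> card P"
proof -
  have bound: "card QQ \<le> card P" if "finite QQ" "QQ \<subseteq> PP" for QQ
    using finite_dplane_family_bound[OF finP to planes that(1)] that(2) unfolding PP_def by blast
  have "finite PP"
  proof (rule ccontr)
    assume "infinite PP"
    then obtain QQ where "finite QQ" "card QQ = Suc (card P)" "QQ \<subseteq> PP"
      using infinite_arbitrarily_large by blast
    then show False using bound by fastforce
  qed
  then show ?thesis using bound by blast
qed

subsection \<open>Every affine d-plane has minimal free variables\<close>

definition indep_on :: "nat \<Rightarrow> (nat \<Rightarrow> nat \<Rightarrow> 'k::field) \<Rightarrow> nat set \<Rightarrow> bool" where
  "indep_on d v J \<longleftrightarrow> (\<forall>t. (\<forall>j\<in>J. (\<Sum>i<d. t i * v i j) = 0) \<longrightarrow> (\<forall>i<d. t i = 0))"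

definition spans_on :: "nat \<Rightarrow> (nat \<Rightarrow> nat \<Rightarrow> 'k::field) \<Rightarrow> nat set \<Rightarrow> bool" where
  "spans_on d v J \<longleftrightarrow> (\<forall>y. \<exists>t. \<forall>j\<in>J. (\<Sum>i<d. t i * v i j) = y j)"

text \<open>Eliminating the last vector v_d from the others, with arbitrary multipliers c_i.\<close>
lemma sum_pivot:
  fixes v :: "nat \<Rightarrow> nat \<Rightarrow> 'k::field"
  shows "(\<Sum>i<Suc d. t i * v i j) =
    (\<Sum>i<d. t i * (v i j - c i * v d j)) + (t d + (\<Sum>i<d. t i * c i)) * v d j"
proof -
  have "(\<Sum>i<d. t i * (v i j - c i * v d j)) = (\<Sum>i<d. t i * v i j) - (\<Sum>i<d. t i * c i) * v d j"
    by (simp add: right_diff_distrib sum_subtractf sum_distrib_right mult.assoc)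
  then show ?thesis by (simp add: algebra_simps)
qed

lemma pivot_indep:
  fixes v :: "nat \<Rightarrow> nat \<Rightarrow> 'k::field"
  assumes "indep_on (Suc d) v UNIV"
  shows "indep_on d (\<lambda>i j. v i j - c i * v d j) UNIV"
  unfolding indep_on_def
proof (intro allI impI)
  fix t :: "nat \<Rightarrow> 'k" and i
  assume h: "\<forall>j\<in>UNIV. (\<Sum>i<d. t i * (v i j - c i * v d j)) = 0" and i: "i < d"
  define t' where "t' = t(d := - (\<Sum>i<d. t i * c i))"
  have same: "(\<Sum>i<d. t' i * f i) = (\<Sum>i<d. t i * f i)" for f :: "nat \<Rightarrow> 'k"
    by (rule sum.cong) (auto simp: t'_def)
  have "\<forall>j\<in>UNIV. (\<Sum>i<Suc d. t' i * v i j) = 0"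
    unfolding sum_pivot[where c = c] same using h by (simp add: t'_def)
  then have t'0: "\<forall>i<Suc d. t' i = 0" using assms unfolding indep_on_def by blast
  then have "t' i = 0" using i by simp
  then show "t i = 0" using i by (simp add: t'_def)
qed

lemma pivot_extend:
  fixes v :: "nat \<Rightarrow> nat \<Rightarrow> 'k::field"
  assumes j0: "v d j0 \<noteq> 0"
    and c: "c = (\<lambda>i. v i j0 / v d j0)"
    and span: "spans_on d (\<lambda>i j. v i j - c i * v d j) J'"
    and indep: "indep_on d (\<lambda>i j. v i j - c i * v d j) J'"
  shows "j0 \<notin> J'" "spans_on (Suc d) v (insert j0 J')" "indep_on (Suc d) v (insert j0 J')"
proof -
  let ?w = "\<lambda>i j. v i j - c i * v d j"
  have w0: "?w i j0 = 0" for i using j0 by (simp add: c)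
  have w_sum0: "(\<Sum>i<d. t i * ?w i j0) = 0" for t
    by (simp only: w0 mult_zero_right sum.neutral_const)
  show "j0 \<notin> J'"
  proof
    assume "j0 \<in> J'"
    obtain t where "\<forall>j\<in>J'. (\<Sum>i<d. t i * ?w i j) = 1"
      using span[unfolded spans_on_def, rule_format, of "\<lambda>_. 1"] by blast
    then have "(\<Sum>i<d. t i * ?w i j0) = 1" using \<open>j0 \<in> J'\<close> by blast
    then show False using w_sum0 by simp
  qed
  show "spans_on (Suc d) v (insert j0 J')"
    unfolding spans_on_def
  proof
    fix y :: "nat \<Rightarrow> 'k"
    define u where "u = y j0 / v d j0"
    obtain t where t: "\<forall>j\<in>J'. (\<Sum>i<d. t i * ?w i j) = y j - u * v d j"
      using span[unfolded spans_on_def, rule_format, of "\<lambda>j. y j - u * v d j"] by blast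
    define T where "T = t(d := u - (\<Sum>i<d. t i * c i))"
    have same: "(\<Sum>i<d. T i * f i) = (\<Sum>i<d. t i * f i)" for f :: "nat \<Rightarrow> 'k"
      by (rule sum.cong) (auto simp: T_def)
    have eq: "(\<Sum>i<Suc d. T i * v i j) = (\<Sum>i<d. t i * ?w i j) + u * v d j" for j
      unfolding sum_pivot[where c = c] same by (simp add: T_def)
    have "(\<Sum>i<Suc d. T i * v i j) = y j" if "j \<in> insert j0 J'" for j
    proof (cases "j = j0")
      case True
      have "(\<Sum>i<Suc d. T i * v i j0) = u * v d j0" unfolding eq w_sum0 by simp
      then show ?thesis using True j0 by (simp add: u_def)
    next
      case False
      then show ?thesis unfolding eq using that t by simp
    qed
    then show "\<exists>t. \<forall>j\<in>insert j0 J'. (\<Sum>i<Suc d. t i * v i j) = y j" by blast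
  qed
  show "indep_on (Suc d) v (insert j0 J')"
    unfolding indep_on_def
  proof (intro allI impI)
    fix t :: "nat \<Rightarrow> 'k" and i
    assume h: "\<forall>j\<in>insert j0 J'. (\<Sum>i<Suc d. t i * v i j) = 0" and i: "i < Suc d"
    define u where "u = t d + (\<Sum>i<d. t i * c i)"
    have "(\<Sum>i<Suc d. t i * v i j0) = u * v d j0"
      unfolding sum_pivot[where t = t and v = v and d = d and j = j0 and c = c] w_sum0 u_def by simp
    then have "u * v d j0 = 0" using h by simp
    then have u0: "u = 0" using j0 by simp
    have "(\<Sum>i<Suc d. t i * v i j) = (\<Sum>i<d. t i * ?w i j)" for j
      unfolding sum_pivot[where t = t and v = v and d = d and j = j and c = c] u0[unfolded u_def] by simp
    then have "\<forall>j\<in>J'. (\<Sum>i<d. t i * ?w i j) = 0" using h by simp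
    then have td: "\<forall>i<d. t i = 0" using indep unfolding indep_on_def by blast
    then have "t d = 0" using u0 by (simp add: u_def)
    then show "t i = 0" using td i less_Suc_eq by auto
  qed
qed
text \<open>Gaussian elimination: d linearly independent vectors of k^n have d coordinates on which
  they are independent and spanning.\<close>
lemma independent_coordinates_exist:
  fixes v :: "nat \<Rightarrow> nat \<Rightarrow> 'k::field"
  assumes "\<forall>i<d. \<forall>j\<ge>n. v i j = 0" and "indep_on d v UNIV"
  shows "\<exists>J. J \<subseteq> {..<n} \<and> card J = d \<and> spans_on d v J \<and> indep_on d v J"
  using assms
proof (induction d arbitrary: v)
  case 0
  then show ?case by (intro exI[of _ "{}"]) (auto simp: spans_on_def indep_on_def)
next
  case (Suc d)
  have "\<exists>j0. v d j0 \<noteq> 0"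
  proof (rule ccontr)
    let ?e = "\<lambda>i. if i = d then 1 else (0::'k)"
    assume "\<nexists>j0. v d j0 \<noteq> 0"
    then have zero: "\<forall>j\<in>UNIV. (\<Sum>i<Suc d. ?e i * v i j) = 0" by simp
    from Suc.prems(2) have imp: "(\<forall>j\<in>UNIV. (\<Sum>i<Suc d. ?e i * v i j) = 0) \<longrightarrow> (\<forall>i<Suc d. ?e i = 0)"
      unfolding indep_on_def by (rule spec)
    have "\<forall>i<Suc d. ?e i = 0" using imp zero by (rule mp)
    then show False by auto
  qed
  then obtain j0 where j0: "v d j0 \<noteq> 0" by blast
  then have j0n: "j0 < n" using Suc.prems(1) by (meson lessI not_le)
  define c where "c = (\<lambda>i. v i j0 / v d j0)"
  have "\<forall>i<d. \<forall>j\<ge>n. v i j - c i * v d j = 0" using Suc.prems(1) by simp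
  moreover have "indep_on d (\<lambda>i j. v i j - c i * v d j) UNIV" using Suc.prems(2) by (rule pivot_indep)
  ultimately have "\<exists>J'. J' \<subseteq> {..<n} \<and> card J' = d \<and>
    spans_on d (\<lambda>i j. v i j - c i * v d j) J' \<and> indep_on d (\<lambda>i j. v i j - c i * v d j) J'"
    by (rule Suc.IH)
  then obtain J' where J': "J' \<subseteq> {..<n}" "card J' = d"
    "spans_on d (\<lambda>i j. v i j - c i * v d j) J'" "indep_on d (\<lambda>i j. v i j - c i * v d j) J'"
    by blast
  note ext = pivot_extend[OF j0 c_def J'(3,4)]
  have "finite J'" using J'(1) by (rule finite_subset) simp
  then have "card (insert j0 J') = Suc d" using ext(1) J'(2) by simp
  moreover have "insert j0 J' \<subseteq> {..<n}" using J'(1) j0n by simp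
  ultimately show ?case using ext(2,3) by blast
qed

lemma free_vars_exist:
  fixes S :: "(nat \<Rightarrow> 'k::field) set"
  assumes "affine_dplane n d S"
  shows "\<exists>J. free_vars n d S J"
proof -
  obtain p v where v: "\<forall>i<d. v i \<in> points n"
    and ind: "\<forall>t. (\<forall>j. (\<Sum>i<d. t i * v i j) = 0) \<longrightarrow> (\<forall>i<d. t i = 0)"
    and S: "S = {(\<lambda>j. p j + (\<Sum>i<d. t i * v i j)) | t. True}"
    using assms unfolding affine_dplane_def by blast
  have "\<forall>i<d. \<forall>j\<ge>n. v i j = 0" using v by (simp add: points_def)
  moreover have "indep_on d v UNIV" using ind by (simp add: indep_on_def)
  ultimately obtain J where J: "J \<subseteq> {..<n}" "card J = d" "spans_on d v J" "indep_on d v J"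
    using independent_coordinates_exist by blast
  have "inj_on (\<lambda>x. restrict x J) S"
  proof (rule inj_onI)
    fix x x' assume "x \<in> S" "x' \<in> S" and eq: "restrict x J = restrict x' J"
    then obtain t t' where x: "x = (\<lambda>j. p j + (\<Sum>i<d. t i * v i j))"
      and x': "x' = (\<lambda>j. p j + (\<Sum>i<d. t' i * v i j))" using S by blast
    have "\<forall>j\<in>J. (\<Sum>i<d. (t i - t' i) * v i j) = 0"
    proof
      fix j assume "j \<in> J"
      then have "x j = x' j" using eq by (metis restrict_apply')
      then show "(\<Sum>i<d. (t i - t' i) * v i j) = 0"
        by (simp add: x x' left_diff_distrib sum_subtractf)
    qed
    moreover from J(4) have "(\<forall>j\<in>J. (\<Sum>i<d. (t i - t' i) * v i j) = 0) \<longrightarrow> (\<forall>i<d. t i - t' i = 0)"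
      unfolding indep_on_def by (rule spec)
    ultimately have "\<forall>i<d. t i = t' i" by simp
    then show "x = x'" unfolding x x' by (intro ext sum.cong arg_cong2[where f="(+)"]) auto
  qed
  moreover have "J \<rightarrow>\<^sub>E UNIV \<subseteq> (\<lambda>x. restrict x J) ` S"
  proof
    fix y :: "nat \<Rightarrow> 'k" assume y: "y \<in> J \<rightarrow>\<^sub>E UNIV"
    obtain t where t: "\<forall>j\<in>J. (\<Sum>i<d. t i * v i j) = y j - p j"
      using J(3)[unfolded spans_on_def, rule_format, of "\<lambda>j. y j - p j"] by blast
    let ?x = "\<lambda>j. p j + (\<Sum>i<d. t i * v i j)"
    have "restrict ?x J = y"
      using t y by (intro ext) (auto simp: PiE_def extensional_def)
    moreover have "?x \<in> S" using S by blast
    ultimately show "y \<in> (\<lambda>x. restrict x J) ` S" by blast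
  qed
  moreover have "(\<lambda>x. restrict x J) ` S \<subseteq> J \<rightarrow>\<^sub>E UNIV" by auto
  ultimately have "bij_betw (\<lambda>x. restrict x J) S (J \<rightarrow>\<^sub>E (UNIV :: 'k set))"
    unfolding bij_betw_def by blast
  then show ?thesis using J unfolding free_vars_def by blast
qed

text \<open>A set of free variables with least index sum cannot be improved by exchanging a
  variable for a smaller one, so it is minimal.\<close>
lemma minimal_free_vars_exist:
  fixes S :: "(nat \<Rightarrow> 'k::field) set"
  assumes "affine_dplane n d S"
  shows "\<exists>J. minimal_free_vars n d S J"
proof -
  obtain J0 where "free_vars n d S J0" using free_vars_exist[OF assms] by blast
  then obtain J where J: "free_vars n d S J"
    and least: "\<forall>J'. free_vars n d S J' \<longrightarrow> sum id J \<le> sum id J'"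
    using ex_has_least_nat[of "free_vars n d S" J0 "sum id"] by blast
  have "J \<subseteq> {..<n}" using J unfolding free_vars_def by blast
  then have finJ: "finite J" by (rule finite_subset) simp
  have "\<not> (\<exists>j\<in>J. \<exists>i\<in>{..<n} - J. i < j \<and> free_vars n d S ((J - {j}) \<union> {i}))"
  proof
    assume "\<exists>j\<in>J. \<exists>i\<in>{..<n} - J. i < j \<and> free_vars n d S ((J - {j}) \<union> {i})"
    then obtain j i where j: "j \<in> J" and i: "i \<notin> J" "i < j"
      and f: "free_vars n d S ((J - {j}) \<union> {i})" by blast
    have "sum id ((J - {j}) \<union> {i}) = sum id (J - {j}) + i" using finJ i by simp
    moreover have "sum id J = sum id (J - {j}) + j" using finJ j by (simp add: sum.remove)
    ultimately have "sum id ((J - {j}) \<union> {i}) < sum id J" using i by simp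
    then show False using least f by fastforce
  qed
  then show ?thesis using J unfolding minimal_free_vars_def by blast
qed

lemma card_le_sum_minimal_free_vars:
  fixes P :: "(nat \<Rightarrow> 'k::field) set set"
  assumes fin: "finite P" and planes: "\<forall>S\<in>P. affine_dplane n d S"
  shows "card P \<le> (\<Sum>J\<in>{J. J \<subseteq> {..<n} \<and> card J = d}. card {S\<in>P. minimal_free_vars n d S J})"
proof -
  let ?JS = "{J. J \<subseteq> {..<n} \<and> card J = d}"
  have finJS: "finite ?JS" by (rule finite_subset[of _ "Pow {..<n}"]) auto
  have "P \<subseteq> (\<Union>J\<in>?JS. {S\<in>P. minimal_free_vars n d S J})"
  proof
    fix S assume S: "S \<in> P"
    then obtain J where J: "minimal_free_vars n d S J"
      using minimal_free_vars_exist planes by blast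
    then have "J \<in> ?JS" unfolding minimal_free_vars_def free_vars_def by blast
    then show "S \<in> (\<Union>J\<in>?JS. {S\<in>P. minimal_free_vars n d S J})" using S J by blast
  qed
  then have "card P \<le> card (\<Union>J\<in>?JS. {S\<in>P. minimal_free_vars n d S J})"
    by (rule card_mono[rotated]) (use fin finJS in auto)
  also have "\<dots> \<le> (\<Sum>J\<in>?JS. card {S\<in>P. minimal_free_vars n d S J})"
    using finJS by (rule card_UN_le)
  finally show ?thesis .
qed

lemma disjoint_parts_cover:
  assumes finX: "finite X" and finI: "finite I" and sub: "\<forall>i\<in>I. F i \<subseteq> X"
    and disj: "\<forall>i\<in>I. \<forall>j\<in>I. i \<noteq> j \<longrightarrow> F i \<inter> F j = {}"
    and big: "card X \<le> (\<Sum>i\<in>I. card (F i))"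
  shows "X = (\<Union>i\<in>I. F i)"
proof -
  have finF: "\<forall>i\<in>I. finite (F i)" using sub finX finite_subset by blast
  have "card (\<Union>i\<in>I. F i) = (\<Sum>i\<in>I. card (F i))"
    using finI finF disj by (rule card_UN_disjoint)
  then have "card X \<le> card (\<Union>i\<in>I. F i)" using big by simp
  moreover have "(\<Union>i\<in>I. F i) \<subseteq> X" using sub by blast
  ultimately show ?thesis using finX by (metis card_seteq)
qed

lemma partition_by_direction:
  assumes finPP: "finite PP" and finJS: "finite JS"
    and big: "card PP \<le> (\<Sum>J\<in>JS. card (F J))"
    and F_R: "\<forall>J\<in>JS. F J \<subseteq> {Q. R J Q}"
    and R_PP: "\<forall>J Q. R J Q \<longrightarrow> Q \<in> PP"
    and R_unique: "\<forall>J J' Q. R J Q \<longrightarrow> R J' Q \<longrightarrow> J = J'"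
  shows "PP = (\<Union>J\<in>JS. F J)" and "\<And>J. J \<in> JS \<Longrightarrow> {Q. R J Q} = F J"
proof -
  have F: "R J Q" if "J \<in> JS" "Q \<in> F J" for J Q using F_R that by blast
  show cover: "PP = (\<Union>J\<in>JS. F J)"
  proof (rule disjoint_parts_cover[OF finPP finJS _ _ big])
    show "\<forall>J\<in>JS. F J \<subseteq> PP" using F R_PP by blast
    show "\<forall>J1\<in>JS. \<forall>J2\<in>JS. J1 \<noteq> J2 \<longrightarrow> F J1 \<inter> F J2 = {}"
    proof (intro ballI impI equals0I)
      fix J1 J2 Q assume J: "J1 \<in> JS" "J2 \<in> JS" "J1 \<noteq> J2" and Q: "Q \<in> F J1 \<inter> F J2"
      have "J1 = J2" using R_unique F[OF J(1)] F[OF J(2)] Q by blast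
      then show False using J(3) by contradiction
    qed
  qed
  fix J assume J: "J \<in> JS"
  show "{Q. R J Q} = F J"
  proof (intro equalityI subsetI)
    fix Q assume "Q \<in> {Q. R J Q}"
    then have Q: "R J Q" by simp
    have "Q \<in> (\<Union>J\<in>JS. F J)" using R_PP Q unfolding cover by blast
    then obtain J' where J': "J' \<in> JS" "Q \<in> F J'" by blast
    have "J' = J" using R_unique F[OF J'] Q by blast
    then show "Q \<in> F J" using J'(2) by simp
  next
    fix Q assume "Q \<in> F J"
    then show "Q \<in> {Q. R J Q}" using F[OF J] by simp
  qed
qed

theorem mainTheorem3:
  fixes n d :: nat
    and tord :: "mono \<Rightarrow> mono \<Rightarrow> bool"
    and \<P> :: "(nat \<Rightarrow> 'k::field) set set"
  assumes inf: "infinite (UNIV :: 'k set)"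
    and tord_ok: "term_order n tord"
    and var_ord: "\<forall>i j. i < j \<and> j < n \<longrightarrow> tord (Poly_Mapping.single i 1) (Poly_Mapping.single j 1)"
    and fin: "finite \<P>"
    and planes: "\<forall>S\<in>\<P>. affine_dplane n d S"
    and hyp: "\<forall>J. J \<subseteq> {..<n} \<and> card J = d \<longrightarrow>
       (let AJ = \<Union>{S\<in>\<P>. minimal_free_vars n d S J};
            mJ = card {S\<in>\<P>. minimal_free_vars n d S J}
        in (\<forall>J' P. is_dplane_in n d (Dset n tord AJ) J' P \<longrightarrow> J' = J) \<and>
           card {P. \<exists>J'. is_dplane_in n d (Dset n tord AJ) J' P} = mJ)"
  shows "(Eset n d (Dset n tord (\<Union>\<P>)) =
           (\<Union>J\<in>{J. J \<subseteq> {..<n} \<and> card J = d}.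
              Eset n d (Dset n tord (\<Union>{S\<in>\<P>. minimal_free_vars n d S J})))) \<and>
         (\<forall>J. J \<subseteq> {..<n} \<and> card J = d \<longrightarrow>
           card {P. is_dplane_in n d (Dset n tord (\<Union>\<P>)) J P} =
           card {S\<in>\<P>. minimal_free_vars n d S J})"
proof -
  let ?JS = "{J. J \<subseteq> {..<n} \<and> card J = d}" and ?D = "Dset n tord (\<Union>\<P>)"
  define DJ where "DJ J = Dset n tord (\<Union>{S\<in>\<P>. minimal_free_vars n d S J})" for J
  define PJ where "PJ J = {P. \<exists>J'. is_dplane_in n d (DJ J) J' P}" for J
  define PP where "PP = {P. \<exists>J. is_dplane_in n d ?D J P}"
  have PJ: "(\<forall>J' Q. is_dplane_in n d (DJ J) J' Q \<longrightarrow> J' = J) \<and>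
      card (PJ J) = card {S\<in>\<P>. minimal_free_vars n d S J}" if "J \<in> ?JS" for J
    using hyp that unfolding DJ_def PJ_def Let_def by blast
  have PJ_in_D: "is_dplane_in n d ?D J Q" if J: "J \<in> ?JS" and Q: "Q \<in> PJ J" for J Q
    using Q PJ[OF J] dplane_in_larger_Dset[of n d tord _ _ Q "\<Union>\<P>"]
    unfolding PJ_def DJ_def by blast
  obtain finPP: "finite PP" and cardPP: "card PP \<le> card \<P>"
    using card_dplanes_in_Dset_le[OF fin tord_ok planes] unfolding PP_def by blast
  have finJS: "finite ?JS" by (rule finite_subset[of _ "Pow {..<n}"]) auto
  have bound: "card PP \<le> (\<Sum>J\<in>?JS. card (PJ J))"
    using cardPP card_le_sum_minimal_free_vars[OF fin planes] PJ by simp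
  have F_R: "\<forall>J\<in>?JS. PJ J \<subseteq> {Q. is_dplane_in n d ?D J Q}" using PJ_in_D by blast
  have R_PP: "\<forall>J Q. is_dplane_in n d ?D J Q \<longrightarrow> Q \<in> PP" unfolding PP_def by blast
  have R_unique: "\<forall>J J' Q. is_dplane_in n d ?D J Q \<longrightarrow> is_dplane_in n d ?D J' Q \<longrightarrow> J = J'"
    using dplane_dir_unique by blast
  note partition = partition_by_direction[OF finPP finJS bound F_R R_PP R_unique]
  have "Eset n d ?D = \<Union>PP" unfolding Eset_def PP_def ..
  also have "\<dots> = (\<Union>J\<in>?JS. \<Union>(PJ J))" unfolding partition(1) by blast
  also have "\<dots> = (\<Union>J\<in>?JS. Eset n d (DJ J))" unfolding Eset_def PJ_def ..
  finally have part1: "Eset n d ?D = (\<Union>J\<in>?JS. Eset n d (DJ J))" .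
  have part2: "card {Q. is_dplane_in n d ?D J Q} = card {S\<in>\<P>. minimal_free_vars n d S J}"
    if "J \<in> ?JS" for J
    using partition(2)[OF that] PJ[OF that] by simp
  show ?thesis
  proof (intro conjI allI impI)
    show "Eset n d ?D = (\<Union>J\<in>?JS. Eset n d (Dset n tord (\<Union>{S\<in>\<P>. minimal_free_vars n d S J})))"
      using part1 unfolding DJ_def .
  next
    fix J assume "J \<subseteq> {..<n} \<and> card J = d"
    then show "card {P. is_dplane_in n d ?D J P} = card {S\<in>\<P>. minimal_free_vars n d S J}"
      using part2 by simp
  qed
qed
end
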